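(* Let $L\in\mathbb{R}^{n\times n}$ be the Laplacian of an undirected unweighted graph on $n$ nodes, let $s \in \mathbb{R}^n$ be a mean-zero innate opinion vector and $z = (I+L)^{-1}s$. Let $(u_1,v_1)$ ($u_1\ne v_1$) be a pair of nodes not joined by an edge and $(u_2,v_2)$ an edge of the graph, with edge Laplacians $E_k = \chi_{u_k,v_k}\chi_{u_k,v_k}^T$ and $\delta_k = z(u_k)-z(v_k)$ for $k=1,2$. If $|\delta_2| > \frac{3\sqrt3}{4}\,|\delta_1|$, then $$PD(L+E_1-E_2) > PD(L).$$
   Context: $\chi_{u,v}\in\mathbb{R}^n$ is the vector with $1$ in coordinate $u$, $-1$ in coordinate $v$ and $0$ elsewhere. Friedkin–Johnsen model: expressed opinions $z=(I+L)^{-1}s$. With $s$ fixed, the polarization+disagreement of a graph with Laplacian $M$ is $PD(M) = s^T (I+M)^{-1} s$. *)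

theory Defs
  imports "HOL-Analysis.Analysis"
begin

definition simple_graph :: "('n \<Rightarrow> 'n \<Rightarrow> bool) \<Rightarrow> bool" where
  "simple_graph G \<longleftrightarrow> (\<forall>i j. G i j \<longrightarrow> G j i) \<and> (\<forall>i. \<not> G i i)"

definition laplacian :: "('n::finite \<Rightarrow> 'n \<Rightarrow> bool) \<Rightarrow> real^'n^'n" where
  "laplacian G = (\<chi> i j. if i = j then real (card {k. G i k})
                          else if G i j then -1 else 0)"

definition chi_vec :: "'n::finite \<Rightarrow> 'n \<Rightarrow> real^'n" where
  "chi_vec u v = (\<chi> i. if i = u then 1 else if i = v then -1 else 0)"

definition edge_lap :: "'n::finite \<Rightarrow> 'n \<Rightarrow> real^'n^'n" where
  "edge_lap u v = (\<chi> i j. chi_vec u v $ i * chi_vec u v $ j)"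

definition fj_opinions :: "real^'n^'n \<Rightarrow> real^'n \<Rightarrow> real^'n" where
  "fj_opinions L s = matrix_inv (mat 1 + L) *v s"

definition PD :: "real^'n \<Rightarrow> real^'n^'n \<Rightarrow> real" where
  "PD s M = s \<bullet> (matrix_inv (mat 1 + M) *v s)"

end

theory Submission
  imports Defs
begin

text \<open>For symmetric positive semidefinite \<open>M\<close> and \<open>(I + M) y = s\<close>, the concave
  quadratic \<open>x \<mapsto> 2 s\<^sup>T x - x\<^sup>T (I + M) x\<close> is maximised at \<open>y\<close>, with maximum
  \<open>s\<^sup>T y = PD(M)\<close>. Evaluating it for \<open>M = L + E\<^sub>1 - E\<^sub>2\<close> at the old opinions \<open>z\<close>
  gives \<open>PD(L + E\<^sub>1 - E\<^sub>2) \<ge> PD(L) + \<delta>\<^sub>2\<^sup>2 - \<delta>\<^sub>1\<^sup>2\<close>, and \<open>3\<surd>3/4 \<ge> 1\<close> makes the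
  right-hand side exceed \<open>PD(L)\<close>. The matrix \<open>L + E\<^sub>1 - E\<^sub>2\<close> stays positive
  semidefinite because \<open>(u\<^sub>2, v\<^sub>2)\<close> is an edge, so \<open>x\<^sup>T L x \<ge> (x u\<^sub>2 - x v\<^sub>2)\<^sup>2\<close>.\<close>

lemma matrix_inv_mult_vector_right:
  fixes M :: "'a::field^'n^'n"
  assumes "\<And>x. M *v x = 0 \<Longrightarrow> x = 0"
  shows "M *v (matrix_inv M *v s) = s"
proof -
  have "invertible M"
    using assms matrix_left_invertible_ker invertible_left_inverse by blast
  then have "\<exists>A. M ** A = mat 1 \<and> A ** M = mat 1"
    by (simp add: invertible_def)
  then have "M ** matrix_inv M = mat 1"
    unfolding matrix_inv_def by (rule someI2_ex) blast
  then show ?thesis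
    by (simp add: matrix_vector_mul_assoc)
qed

lemma symmetric_inner_matrix_vector:
  fixes M :: "real^'n^'n"
  assumes "transpose M = M"
  shows "(M *v y) \<bullet> z = y \<bullet> (M *v z)"
  by (metis assms dot_lmul_matrix inner_commute transpose_matrix_vector)

lemma quadratic_form_le_at_solution:
  fixes M :: "real^'n^'n"
  assumes "transpose M = M" and "\<And>x. 0 \<le> x \<bullet> (M *v x)" and "M *v y = s"
  shows "2 * (s \<bullet> x) - x \<bullet> (M *v x) \<le> s \<bullet> y"
proof -
  have "0 \<le> (y - x) \<bullet> (M *v (y - x))"
    by (rule assms(2))
  also have "\<dots> = y \<bullet> (M *v y) - (M *v y) \<bullet> x - x \<bullet> (M *v y) + x \<bullet> (M *v x)"
    using symmetric_inner_matrix_vector[OF assms(1)]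
    by (simp add: matrix_vector_mult_diff_distrib inner_diff_left inner_diff_right)
  also have "\<dots> = s \<bullet> y - 2 * (s \<bullet> x) + x \<bullet> (M *v x)"
    using assms(3) by (simp add: inner_commute)
  finally show ?thesis
    by linarith
qed

lemma inner_mat_1_plus_mult_vector:
  fixes M :: "real^'n^'n"
  shows "x \<bullet> ((mat 1 + M) *v x) = x \<bullet> x + x \<bullet> (M *v x)"
  by (simp add: matrix_vector_mult_add_rdistrib inner_add_right)

lemma transpose_add: "transpose (A + B) = transpose A + (transpose B :: 'a::semiring_1^'n^'m)"
  by (simp add: transpose_def vec_eq_iff)

lemma transpose_diff: "transpose (A - B) = transpose A - (transpose B :: 'a::ring_1^'n^'m)"
  by (simp add: transpose_def vec_eq_iff)

lemma fj_opinions_solves: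
  fixes M :: "real^'n^'n"
  assumes "\<And>x. 0 \<le> x \<bullet> (M *v x)"
  shows "(mat 1 + M) *v fj_opinions M s = s"
  unfolding fj_opinions_def
proof (rule matrix_inv_mult_vector_right)
  fix x :: "real^'n"
  assume "(mat 1 + M) *v x = 0"
  then have "x \<bullet> x \<le> 0"
    using assms[of x] inner_mat_1_plus_mult_vector[of x M] by simp
  then show "x = 0"
    using inner_gt_zero_iff[of x] by linarith
qed

lemma PD_ge_quadratic:
  fixes M :: "real^'n^'n"
  assumes "transpose M = M" and "\<And>x. 0 \<le> x \<bullet> (M *v x)"
  shows "2 * (s \<bullet> x) - x \<bullet> ((mat 1 + M) *v x) \<le> PD s M"
proof -
  have "\<And>x. 0 \<le> x \<bullet> ((mat 1 + M) *v x)"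
    using assms(2) by (simp add: inner_mat_1_plus_mult_vector add_nonneg_nonneg)
  with assms(1) fj_opinions_solves[OF assms(2)]
  have "2 * (s \<bullet> x) - x \<bullet> ((mat 1 + M) *v x) \<le> s \<bullet> fj_opinions M s"
    by (intro quadratic_form_le_at_solution) (simp_all add: transpose_add)
  then show ?thesis
    by (simp add: PD_def fj_opinions_def)
qed

lemma inner_chi_vec: "u \<noteq> v \<Longrightarrow> chi_vec u v \<bullet> x = x $ u - x $ v"
proof -
  assume "u \<noteq> v"
  then have "chi_vec u v = axis u 1 - axis v 1"
    by (auto simp: chi_vec_def vec_eq_iff axis_def)
  then show ?thesis
    by (simp add: inner_diff_left inner_axis')
qed

lemma edge_lap_mult_vector: "edge_lap u v *v x = (chi_vec u v \<bullet> x) *\<^sub>R chi_vec u v"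
  by (simp add: edge_lap_def matrix_vector_mult_def vec_eq_iff inner_vec_def
      sum_distrib_left sum_distrib_right mult_ac)

lemma edge_lap_quadratic_form: "u \<noteq> v \<Longrightarrow> x \<bullet> (edge_lap u v *v x) = (x $ u - x $ v)\<^sup>2"
  using inner_chi_vec[of u v x] inner_commute[of x "chi_vec u v"]
  by (simp add: edge_lap_mult_vector power2_eq_square)

lemma transpose_edge_lap: "transpose (edge_lap u v) = edge_lap u v"
  by (simp add: edge_lap_def transpose_def vec_eq_iff mult.commute)

lemma transpose_laplacian: "simple_graph G \<Longrightarrow> transpose (laplacian G) = laplacian G"
  by (auto simp: simple_graph_def laplacian_def transpose_def vec_eq_iff)

lemma laplacian_mult_vector:
  assumes "simple_graph G"
  shows "(laplacian G *v x) $ i = (\<Sum>j\<in>UNIV. if G i j then x $ i - x $ j else 0)"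
proof -
  have "\<not> G i i"
    using assms by (simp add: simple_graph_def)
  then have entry: "laplacian G $ i $ j * x $ j
      = (if j = i then real (card {k. G i k}) * x $ i else 0) + (if G i j then - x $ j else 0)" for j
    by (auto simp: laplacian_def)
  have "(laplacian G *v x) $ i
      = real (card {k. G i k}) * x $ i + (\<Sum>j\<in>UNIV. if G i j then - x $ j else 0)"
    by (simp add: matrix_vector_mult_def entry sum.distrib)
  also have "\<dots> = (\<Sum>j\<in>UNIV. (if G i j then x $ i else 0) + (if G i j then - x $ j else 0))"
    by (simp add: sum.distrib sum.If_cases)
  also have "\<dots> = (\<Sum>j\<in>UNIV. if G i j then x $ i - x $ j else 0)"
    by (rule sum.cong) auto
  finally show ?thesis .
qed

lemma laplacian_quadratic_form:
  assumes "simple_graph G"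
  shows "2 * (x \<bullet> (laplacian G *v x))
    = (\<Sum>i\<in>UNIV. \<Sum>j\<in>UNIV. if G i j then (x $ i - x $ j)\<^sup>2 else 0)"
proof -
  have sym: "G i j = G j i" for i j
    using assms by (auto simp: simple_graph_def)
  define Q where "Q = (\<Sum>i\<in>UNIV. \<Sum>j\<in>UNIV. if G i j then x $ i * (x $ i - x $ j) else 0)"
  have form: "x \<bullet> (laplacian G *v x) = Q"
    unfolding Q_def inner_vec_def using laplacian_mult_vector[OF assms]
    by (simp add: sum_distrib_left if_distrib cong: if_cong)
  have "Q = (\<Sum>i\<in>UNIV. \<Sum>j\<in>UNIV. if G i j then x $ j * (x $ j - x $ i) else 0)"
    unfolding Q_def by (subst sum.swap) (simp add: sym)
  then have "2 * Q = (\<Sum>i\<in>UNIV. \<Sum>j\<in>UNIV.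
      (if G i j then x $ i * (x $ i - x $ j) else 0) + (if G i j then x $ j * (x $ j - x $ i) else 0))"
    by (simp add: Q_def sum.distrib)
  also have "\<dots> = (\<Sum>i\<in>UNIV. \<Sum>j\<in>UNIV. if G i j then (x $ i - x $ j)\<^sup>2 else 0)"
    by (intro sum.cong refl) (auto simp: power2_eq_square algebra_simps)
  finally show ?thesis
    using form by simp
qed

lemma laplacian_quadratic_form_ge_edge:
  assumes "simple_graph G" and "G u v"
  shows "(x $ u - x $ v)\<^sup>2 \<le> x \<bullet> (laplacian G *v x)"
proof -
  have "u \<noteq> v" and "G v u"
    using assms by (auto simp: simple_graph_def)
  define f where "f i j = (if G i j then (x $ i - x $ j)\<^sup>2 else (0::real))" for i j
  define g where "g i = (\<Sum>j\<in>UNIV. f i j)" for i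
  have f_nonneg: "0 \<le> f i j" for i j
    by (simp add: f_def)
  have "f u v + f v u \<le> g u + g v"
    unfolding g_def by (intro add_mono member_le_sum) (auto simp: f_nonneg)
  also have "\<dots> = sum g {u, v}"
    using \<open>u \<noteq> v\<close> by simp
  also have "\<dots> \<le> sum g UNIV"
    by (rule sum_mono2) (auto simp: g_def f_nonneg sum_nonneg)
  also have "\<dots> = 2 * (x \<bullet> (laplacian G *v x))"
    using laplacian_quadratic_form[OF assms(1)] by (simp add: g_def f_def)
  finally show ?thesis
    using assms(2) \<open>G v u\<close> by (simp add: f_def power2_commute)
qed

lemma laplacian_quadratic_form_nonneg:
  assumes "simple_graph G"
  shows "0 \<le> x \<bullet> (laplacian G *v x)"
proof -
  have "0 \<le> (\<Sum>i\<in>UNIV. \<Sum>j\<in>UNIV. if G i j then (x $ i - x $ j)\<^sup>2 else 0)"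
    by (intro sum_nonneg) auto
  then show ?thesis
    using laplacian_quadratic_form[OF assms, of x] by linarith
qed

lemma quadratic_form_add_diff_edge_lap:
  fixes M :: "real^'n^'n"
  assumes "u1 \<noteq> v1" and "u2 \<noteq> v2"
  shows "x \<bullet> ((M + edge_lap u1 v1 - edge_lap u2 v2) *v x)
    = x \<bullet> (M *v x) + (x $ u1 - x $ v1)\<^sup>2 - (x $ u2 - x $ v2)\<^sup>2"
  using edge_lap_quadratic_form[OF assms(1)] edge_lap_quadratic_form[OF assms(2)]
  by (simp add: matrix_vector_mult_add_rdistrib matrix_vector_mult_diff_rdistrib
      inner_add_right inner_diff_right)

lemma three_sqrt_three_div_four_ge_one: "1 \<le> 3 * sqrt 3 / (4::real)"
proof -
  have "4 / 3 = sqrt (16 / 9 :: real)"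
    by (simp add: real_sqrt_divide)
  also have "\<dots> \<le> sqrt 3"
    by simp
  finally show ?thesis
    by simp
qed

lemma power2_less_if_scaled_abs_less:
  fixes a b c :: real
  assumes "1 \<le> c" and "c * \<bar>a\<bar> < \<bar>b\<bar>"
  shows "a\<^sup>2 < b\<^sup>2"
proof -
  have "\<bar>a\<bar> \<le> c * \<bar>a\<bar>"
    using mult_right_mono[OF assms(1) abs_ge_zero] by simp
  then have "\<bar>a\<bar> < \<bar>b\<bar>"
    using assms(2) by linarith
  then show ?thesis
    by (metis abs_le_square_iff not_le)
qed

theorem mainTheorem8:
  fixes G :: "'n::finite \<Rightarrow> 'n \<Rightarrow> bool"
    and s :: "real^'n"
    and u1 v1 u2 v2 :: 'n
  assumes "simple_graph G"
    and "(\<Sum>i\<in>UNIV. s $ i) = 0"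
    and "u1 \<noteq> v1" and "\<not> G u1 v1"
    and "G u2 v2"
    and "\<bar>fj_opinions (laplacian G) s $ u2 - fj_opinions (laplacian G) s $ v2\<bar>
         > 3 * sqrt 3 / 4 * \<bar>fj_opinions (laplacian G) s $ u1 - fj_opinions (laplacian G) s $ v1\<bar>"
  shows "PD s (laplacian G + edge_lap u1 v1 - edge_lap u2 v2) > PD s (laplacian G)"
proof -
  let ?L = "laplacian G" and ?N = "laplacian G + edge_lap u1 v1 - edge_lap u2 v2"
  define z where "z = fj_opinions ?L s"
  have "u2 \<noteq> v2"
    using assms(1,5) by (auto simp: simple_graph_def)
  note N_form = quadratic_form_add_diff_edge_lap[OF assms(3) this, of _ ?L]
  have N_psd: "0 \<le> x \<bullet> (?N *v x)" for x
    using N_form[of x] laplacian_quadratic_form_ge_edge[OF assms(1,5), of x]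
      zero_le_power2[of "x $ u1 - x $ v1"] by linarith
  have N_sym: "transpose ?N = ?N"
    by (simp add: transpose_add transpose_diff transpose_laplacian[OF assms(1)] transpose_edge_lap)
  have "(mat 1 + ?L) *v z = s"
    unfolding z_def by (rule fj_opinions_solves) (rule laplacian_quadratic_form_nonneg[OF assms(1)])
  moreover have "PD s ?L = s \<bullet> z"
    by (simp add: PD_def fj_opinions_def z_def)
  ultimately have "PD s ?L + (z $ u2 - z $ v2)\<^sup>2 - (z $ u1 - z $ v1)\<^sup>2
      = 2 * (s \<bullet> z) - z \<bullet> ((mat 1 + ?N) *v z)"
    using N_form[of z] inner_mat_1_plus_mult_vector[of z ?L] inner_mat_1_plus_mult_vector[of z ?N]
    by (simp add: inner_commute[of s z])
  also have "\<dots> \<le> PD s ?N"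
    by (rule PD_ge_quadratic[OF N_sym N_psd])
  finally show ?thesis
    using power2_less_if_scaled_abs_less[OF three_sqrt_three_div_four_ge_one] assms(6)
    unfolding z_def by fastforce
qed

end
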